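(* Let $(E,\rho,[\cdot,\cdot])$ be a Lie algebroid over $M$ admitting a nondegenerate symmetric fiber metric $g$ on $E$ that is invariant, i.e. $\rho(\psi_1)\,g(\psi_2,\psi_3)=g([\psi_1,\psi_2],\psi_3)+g(\psi_2,[\psi_1,\psi_3])$ for all $\psi_1,\psi_2,\psi_3\in\Gamma(E)$. Then $\rho\equiv 0$.
   Context: A Lie algebroid is a vector bundle $E\to M$ with a bundle map $\rho\colon E\to TM$ and a Lie bracket on $\Gamma(E)$ satisfying $[\psi,f\psi']=f[\psi,\psi']+(\rho(\psi)f)\psi'$ for all $f\in C^\infty(M)$. *)

theory Defs
  imports "HOL-Analysis.Analysis"
begin

text \<open>
  Abstract model of a Lie algebroid over a manifold M (the points of M are the
  elements of the type 'm).  C is the algebra of smooth real functions on M,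
  E x is the fiber over x (a finite-dimensional subspace of a real vector space 'v),
  Gamma is the C-module of smooth sections, anchor psi is the vector field rho(psi)
  acting as a derivation on C, br is the Lie bracket on sections.
\<close>

definition smul_fn :: "('m \<Rightarrow> real) \<Rightarrow> ('m \<Rightarrow> 'v::real_vector) \<Rightarrow> 'm \<Rightarrow> 'v" where
  "smul_fn f \<psi> = (\<lambda>x. f x *\<^sub>R \<psi> x)"

definition function_algebra :: "('m \<Rightarrow> real) set \<Rightarrow> bool" where
  "function_algebra C \<longleftrightarrow>
     (\<forall>c. (\<lambda>_. c) \<in> C) \<and>
     (\<forall>f\<in>C. \<forall>h\<in>C. (\<lambda>x. f x + h x) \<in> C \<and> (\<lambda>x. f x * h x) \<in> C)"

definition vector_bundle_sections ::
  "('m \<Rightarrow> real) set \<Rightarrow> ('m \<Rightarrow> 'v::real_vector set) \<Rightarrow> ('m \<Rightarrow> 'v) set \<Rightarrow> bool" where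
  "vector_bundle_sections C E \<Gamma> \<longleftrightarrow>
     (\<forall>x. subspace (E x) \<and> (\<exists>B. finite B \<and> E x = span B)) \<and>
     (\<forall>\<psi>\<in>\<Gamma>. \<forall>x. \<psi> x \<in> E x) \<and>
     (\<lambda>_. 0) \<in> \<Gamma> \<and>
     (\<forall>\<psi>\<in>\<Gamma>. \<forall>\<phi>\<in>\<Gamma>. (\<lambda>x. \<psi> x + \<phi> x) \<in> \<Gamma>) \<and>
     (\<forall>f\<in>C. \<forall>\<psi>\<in>\<Gamma>. smul_fn f \<psi> \<in> \<Gamma>) \<and>
     (\<forall>x. \<forall>e\<in>E x. \<exists>\<psi>\<in>\<Gamma>. \<psi> x = e)"

definition derivation_on :: "('m \<Rightarrow> real) set \<Rightarrow> (('m \<Rightarrow> real) \<Rightarrow> ('m \<Rightarrow> real)) \<Rightarrow> bool" where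
  "derivation_on C X \<longleftrightarrow>
     (\<forall>f\<in>C. X f \<in> C) \<and>
     (\<forall>f\<in>C. \<forall>h\<in>C. \<forall>a b::real. X (\<lambda>x. a * f x + b * h x) = (\<lambda>x. a * X f x + b * X h x)) \<and>
     (\<forall>f\<in>C. \<forall>h\<in>C. X (\<lambda>x. f x * h x) = (\<lambda>x. f x * X h x + X f x * h x))"

definition lie_algebroid ::
  "('m \<Rightarrow> real) set \<Rightarrow> ('m \<Rightarrow> 'v::real_vector set) \<Rightarrow> ('m \<Rightarrow> 'v) set
   \<Rightarrow> (('m \<Rightarrow> 'v) \<Rightarrow> ('m \<Rightarrow> real) \<Rightarrow> ('m \<Rightarrow> real))
   \<Rightarrow> (('m \<Rightarrow> 'v) \<Rightarrow> ('m \<Rightarrow> 'v) \<Rightarrow> ('m \<Rightarrow> 'v)) \<Rightarrow> bool" where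
  "lie_algebroid C E \<Gamma> anchor br \<longleftrightarrow>
     function_algebra C \<and> vector_bundle_sections C E \<Gamma> \<and>
     \<comment> \<open>anchor: bundle map E \<rightarrow> TM, i.e. C-linear map from sections to vector fields\<close>
     (\<forall>\<psi>\<in>\<Gamma>. derivation_on C (anchor \<psi>)) \<and>
     (\<forall>\<psi>\<in>\<Gamma>. \<forall>\<phi>\<in>\<Gamma>. \<forall>f\<in>C.
        anchor (\<lambda>x. \<psi> x + \<phi> x) f = (\<lambda>x. anchor \<psi> f x + anchor \<phi> f x)) \<and>
     (\<forall>h\<in>C. \<forall>\<psi>\<in>\<Gamma>. \<forall>f\<in>C. anchor (smul_fn h \<psi>) f = (\<lambda>x. h x * anchor \<psi> f x)) \<and>
     \<comment> \<open>Lie bracket on sections: R-bilinear, skew, Jacobi\<close>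
     (\<forall>\<psi>\<in>\<Gamma>. \<forall>\<phi>\<in>\<Gamma>. br \<psi> \<phi> \<in> \<Gamma>) \<and>
     (\<forall>\<psi>1\<in>\<Gamma>. \<forall>\<psi>2\<in>\<Gamma>. \<forall>\<phi>\<in>\<Gamma>. \<forall>a b::real.
        br (\<lambda>x. a *\<^sub>R \<psi>1 x + b *\<^sub>R \<psi>2 x) \<phi> = (\<lambda>x. a *\<^sub>R br \<psi>1 \<phi> x + b *\<^sub>R br \<psi>2 \<phi> x)) \<and>
     (\<forall>\<psi>\<in>\<Gamma>. \<forall>\<phi>\<in>\<Gamma>. br \<psi> \<phi> = (\<lambda>x. - br \<phi> \<psi> x)) \<and>
     (\<forall>\<psi>1\<in>\<Gamma>. \<forall>\<psi>2\<in>\<Gamma>. \<forall>\<psi>3\<in>\<Gamma>.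
        (\<lambda>x. br \<psi>1 (br \<psi>2 \<psi>3) x + br \<psi>2 (br \<psi>3 \<psi>1) x + br \<psi>3 (br \<psi>1 \<psi>2) x) = (\<lambda>_. 0)) \<and>
     \<comment> \<open>Leibniz rule [psi, f psi'] = f [psi, psi'] + (rho(psi) f) psi'\<close>
     (\<forall>\<psi>\<in>\<Gamma>. \<forall>\<phi>\<in>\<Gamma>. \<forall>f\<in>C.
        br \<psi> (smul_fn f \<phi>) = (\<lambda>x. f x *\<^sub>R br \<psi> \<phi> x + anchor \<psi> f x *\<^sub>R \<phi> x))"

definition nondeg_sym_fiber_metric ::
  "('m \<Rightarrow> real) set \<Rightarrow> ('m \<Rightarrow> 'v::real_vector set) \<Rightarrow> ('m \<Rightarrow> 'v) set
   \<Rightarrow> ('m \<Rightarrow> 'v \<Rightarrow> 'v \<Rightarrow> real) \<Rightarrow> bool" where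
  "nondeg_sym_fiber_metric C E \<Gamma> g \<longleftrightarrow>
     (\<forall>x. \<forall>u\<in>E x. \<forall>v\<in>E x. g x u v = g x v u) \<and>
     (\<forall>x. \<forall>u\<in>E x. \<forall>v\<in>E x. \<forall>w\<in>E x. \<forall>a b::real.
        g x (a *\<^sub>R u + b *\<^sub>R v) w = a * g x u w + b * g x v w) \<and>
     (\<forall>x. \<forall>u\<in>E x. (\<forall>v\<in>E x. g x u v = 0) \<longrightarrow> u = 0) \<and>
     (\<forall>\<psi>\<in>\<Gamma>. \<forall>\<phi>\<in>\<Gamma>. (\<lambda>x. g x (\<psi> x) (\<phi> x)) \<in> C)"

definition invariant_metric ::
  "('m \<Rightarrow> 'v::real_vector) set \<Rightarrow> (('m \<Rightarrow> 'v) \<Rightarrow> ('m \<Rightarrow> real) \<Rightarrow> ('m \<Rightarrow> real))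
   \<Rightarrow> (('m \<Rightarrow> 'v) \<Rightarrow> ('m \<Rightarrow> 'v) \<Rightarrow> ('m \<Rightarrow> 'v)) \<Rightarrow> ('m \<Rightarrow> 'v \<Rightarrow> 'v \<Rightarrow> real) \<Rightarrow> bool" where
  "invariant_metric \<Gamma> anchor br g \<longleftrightarrow>
     (\<forall>\<psi>1\<in>\<Gamma>. \<forall>\<psi>2\<in>\<Gamma>. \<forall>\<psi>3\<in>\<Gamma>.
        anchor \<psi>1 (\<lambda>x. g x (\<psi>2 x) (\<psi>3 x)) =
        (\<lambda>x. g x (br \<psi>1 \<psi>2 x) (\<psi>3 x) + g x (\<psi>2 x) (br \<psi>1 \<psi>3 x)))"

end

theory Submission
  imports Defs
begin

text \<open>
  Fix a section \<psi>, a function f and put k = \<rho>(\<psi>) f.  Differentiating g(\<psi>,\<psi>) along f \<phi> in two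
  ways, once by C-linearity of the anchor and once by invariance together with the Leibniz
  rule, gives k g(\<phi>,\<psi>) = 0 for every section \<phi>.  By nondegeneracy \<psi> vanishes wherever k does
  not, so k \<psi> is the zero section, and hence k * k = \<rho>(k \<psi>) f = 0.
\<close>

locale lie_algebroid_structure =
  fixes C :: "('m \<Rightarrow> real) set"
    and E :: "'m \<Rightarrow> 'v::real_vector set"
    and \<Gamma> :: "('m \<Rightarrow> 'v) set"
    and anchor :: "('m \<Rightarrow> 'v) \<Rightarrow> ('m \<Rightarrow> real) \<Rightarrow> ('m \<Rightarrow> real)"
    and br :: "('m \<Rightarrow> 'v) \<Rightarrow> ('m \<Rightarrow> 'v) \<Rightarrow> ('m \<Rightarrow> 'v)"
  assumes lie_algebroid: "lie_algebroid C E \<Gamma> anchor br"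
begin

lemma zero_in_functions: "(\<lambda>_. 0) \<in> C"
  using lie_algebroid unfolding lie_algebroid_def function_algebra_def by (elim conjE) blast

lemma zero_in_sections: "(\<lambda>_. 0) \<in> \<Gamma>"
  using lie_algebroid unfolding lie_algebroid_def vector_bundle_sections_def by (elim conjE) blast

lemma section_in_fiber: "\<psi> \<in> \<Gamma> \<Longrightarrow> \<psi> x \<in> E x"
  using lie_algebroid unfolding lie_algebroid_def vector_bundle_sections_def by (elim conjE) blast

lemma smul_in_sections: "f \<in> C \<Longrightarrow> \<psi> \<in> \<Gamma> \<Longrightarrow> smul_fn f \<psi> \<in> \<Gamma>"
  using lie_algebroid unfolding lie_algebroid_def vector_bundle_sections_def by (elim conjE) blast

lemma fiber_vector_extends: "e \<in> E x \<Longrightarrow> \<exists>\<phi>\<in>\<Gamma>. \<phi> x = e"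
  using lie_algebroid unfolding lie_algebroid_def vector_bundle_sections_def by (elim conjE) blast

lemma bracket_in_sections: "\<phi> \<in> \<Gamma> \<Longrightarrow> \<psi> \<in> \<Gamma> \<Longrightarrow> br \<phi> \<psi> \<in> \<Gamma>"
  using lie_algebroid unfolding lie_algebroid_def by (elim conjE) blast

lemma anchor_in_functions: "\<psi> \<in> \<Gamma> \<Longrightarrow> f \<in> C \<Longrightarrow> anchor \<psi> f \<in> C"
  using lie_algebroid unfolding lie_algebroid_def derivation_on_def by (elim conjE) blast

(* The axioms below are extracted verbatim: with skew-symmetry of the bracket (or symmetry of
   the metric) among the premises, simp and blast rewrite in circles. *)
lemma anchor_smul:
  assumes "h \<in> C" "\<psi> \<in> \<Gamma>" "f \<in> C"
  shows "anchor (smul_fn h \<psi>) f x = h x * anchor \<psi> f x"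
proof -
  have "\<forall>h\<in>C. \<forall>\<psi>\<in>\<Gamma>. \<forall>f\<in>C. anchor (smul_fn h \<psi>) f = (\<lambda>x. h x * anchor \<psi> f x)"
    using lie_algebroid unfolding lie_algebroid_def by (elim conjE) assumption
  then have "anchor (smul_fn h \<psi>) f = (\<lambda>x. h x * anchor \<psi> f x)"
    using assms by blast
  then show ?thesis by simp
qed

lemma bracket_skew:
  assumes "\<phi> \<in> \<Gamma>" "\<psi> \<in> \<Gamma>"
  shows "br \<phi> \<psi> x = - br \<psi> \<phi> x"
proof -
  have "\<forall>\<phi>\<in>\<Gamma>. \<forall>\<psi>\<in>\<Gamma>. br \<phi> \<psi> = (\<lambda>x. - br \<psi> \<phi> x)"
    using lie_algebroid unfolding lie_algebroid_def by (elim conjE) assumption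
  then have "br \<phi> \<psi> = (\<lambda>x. - br \<psi> \<phi> x)"
    using assms by blast
  then show ?thesis by simp
qed

lemma bracket_smul_right:
  assumes "\<psi> \<in> \<Gamma>" "\<phi> \<in> \<Gamma>" "f \<in> C"
  shows "br \<psi> (smul_fn f \<phi>) x = f x *\<^sub>R br \<psi> \<phi> x + anchor \<psi> f x *\<^sub>R \<phi> x"
proof -
  have "\<forall>\<psi>\<in>\<Gamma>. \<forall>\<phi>\<in>\<Gamma>. \<forall>f\<in>C.
      br \<psi> (smul_fn f \<phi>) = (\<lambda>x. f x *\<^sub>R br \<psi> \<phi> x + anchor \<psi> f x *\<^sub>R \<phi> x)"
    using lie_algebroid unfolding lie_algebroid_def by (elim conjE) assumption
  then have "br \<psi> (smul_fn f \<phi>) = (\<lambda>x. f x *\<^sub>R br \<psi> \<phi> x + anchor \<psi> f x *\<^sub>R \<phi> x)"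
    using assms by blast
  then show ?thesis by simp
qed

lemma anchor_zero_section:
  assumes "f \<in> C"
  shows "anchor (\<lambda>_. 0) f x = 0"
proof -
  have "smul_fn (\<lambda>_. 0) (\<lambda>_. 0) = ((\<lambda>_. 0) :: 'm \<Rightarrow> 'v)"
    by (simp add: smul_fn_def)
  then show ?thesis
    using anchor_smul[OF zero_in_functions zero_in_sections assms] by simp
qed

lemma bracket_smul_left:
  assumes "f \<in> C" "\<phi> \<in> \<Gamma>" "\<psi> \<in> \<Gamma>"
  shows "br (smul_fn f \<phi>) \<psi> x = f x *\<^sub>R br \<phi> \<psi> x - anchor \<psi> f x *\<^sub>R \<phi> x"
  using bracket_skew[OF smul_in_sections[OF assms(1,2)] assms(3)]
    bracket_smul_right[OF assms(3,2,1)] bracket_skew[OF assms(3,2)]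
  by simp

end

locale lie_algebroid_invariant_metric = lie_algebroid_structure C E \<Gamma> anchor br
  for C :: "('m \<Rightarrow> real) set"
    and E :: "'m \<Rightarrow> 'v::real_vector set"
    and \<Gamma> :: "('m \<Rightarrow> 'v) set"
    and anchor :: "('m \<Rightarrow> 'v) \<Rightarrow> ('m \<Rightarrow> real) \<Rightarrow> ('m \<Rightarrow> real)"
    and br :: "('m \<Rightarrow> 'v) \<Rightarrow> ('m \<Rightarrow> 'v) \<Rightarrow> ('m \<Rightarrow> 'v)" +
  fixes g :: "'m \<Rightarrow> 'v \<Rightarrow> 'v \<Rightarrow> real"
  assumes metric: "nondeg_sym_fiber_metric C E \<Gamma> g"
    and invariant: "invariant_metric \<Gamma> anchor br g"
begin

lemma metric_sym:
  assumes "u \<in> E x" "v \<in> E x"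
  shows "g x u v = g x v u"
proof -
  have "\<forall>x. \<forall>u\<in>E x. \<forall>v\<in>E x. g x u v = g x v u"
    using metric unfolding nondeg_sym_fiber_metric_def by (elim conjE) assumption
  from this[rule_format, OF assms] show ?thesis .
qed

lemma metric_linear_left:
  assumes "u \<in> E x" "v \<in> E x" "w \<in> E x"
  shows "g x (a *\<^sub>R u + b *\<^sub>R v) w = a * g x u w + b * g x v w"
proof -
  have "\<forall>x. \<forall>u\<in>E x. \<forall>v\<in>E x. \<forall>w\<in>E x. \<forall>a b::real.
      g x (a *\<^sub>R u + b *\<^sub>R v) w = a * g x u w + b * g x v w"
    using metric unfolding nondeg_sym_fiber_metric_def by (elim conjE) assumption
  from this[rule_format, OF assms] show ?thesis .
qed

lemma metric_nondegenerate:
  assumes "u \<in> E x" "\<And>v. v \<in> E x \<Longrightarrow> g x u v = 0"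
  shows "u = 0"
proof -
  have "\<forall>x. \<forall>u\<in>E x. (\<forall>v\<in>E x. g x u v = 0) \<longrightarrow> u = 0"
    using metric unfolding nondeg_sym_fiber_metric_def by (elim conjE) assumption
  from this[rule_format, OF assms] show ?thesis .
qed

lemma metric_of_sections:
  assumes "\<phi> \<in> \<Gamma>" "\<psi> \<in> \<Gamma>"
  shows "(\<lambda>x. g x (\<phi> x) (\<psi> x)) \<in> C"
proof -
  have "\<forall>\<phi>\<in>\<Gamma>. \<forall>\<psi>\<in>\<Gamma>. (\<lambda>x. g x (\<phi> x) (\<psi> x)) \<in> C"
    using metric unfolding nondeg_sym_fiber_metric_def by (elim conjE) assumption
  from this[rule_format, OF assms] show ?thesis .
qed

lemma anchor_metric_square:
  assumes "\<phi> \<in> \<Gamma>" "\<psi> \<in> \<Gamma>"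
  shows "anchor \<phi> (\<lambda>x. g x (\<psi> x) (\<psi> x)) x = 2 * g x (br \<phi> \<psi> x) (\<psi> x)"
proof -
  have "anchor \<phi> (\<lambda>x. g x (\<psi> x) (\<psi> x)) = (\<lambda>x. g x (br \<phi> \<psi> x) (\<psi> x) + g x (\<psi> x) (br \<phi> \<psi> x))"
    using invariant assms unfolding invariant_metric_def by blast
  moreover have "g x (\<psi> x) (br \<phi> \<psi> x) = g x (br \<phi> \<psi> x) (\<psi> x)"
    using metric_sym[OF section_in_fiber[OF assms(2)] section_in_fiber[OF bracket_in_sections[OF assms]]] .
  ultimately show ?thesis by simp
qed

lemma anchor_mult_metric_eq_zero:
  assumes \<psi>: "\<psi> \<in> \<Gamma>" and \<phi>: "\<phi> \<in> \<Gamma>" and f: "f \<in> C"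
  shows "anchor \<psi> f x * g x (\<phi> x) (\<psi> x) = 0"
proof -
  define k u where "k = anchor \<psi> f x" and "u = br \<phi> \<psi> x"
  have uE: "u \<in> E x" and \<phi>E: "\<phi> x \<in> E x" and \<psi>E: "\<psi> x \<in> E x"
    unfolding u_def using bracket_in_sections section_in_fiber \<phi> \<psi> by auto
  have "2 * g x (br (smul_fn f \<phi>) \<psi> x) (\<psi> x) = anchor (smul_fn f \<phi>) (\<lambda>x. g x (\<psi> x) (\<psi> x)) x"
    using anchor_metric_square smul_in_sections f \<phi> \<psi> by simp
  also have "\<dots> = f x * anchor \<phi> (\<lambda>x. g x (\<psi> x) (\<psi> x)) x"
    using anchor_smul[OF f \<phi>] metric_of_sections \<psi> by simp
  also have "\<dots> = 2 * (f x * g x u (\<psi> x))"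
    unfolding u_def using anchor_metric_square \<phi> \<psi> by simp
  finally have "g x (f x *\<^sub>R u + (- k) *\<^sub>R \<phi> x) (\<psi> x) = f x * g x u (\<psi> x)"
    using bracket_smul_left[OF f \<phi> \<psi>]
    unfolding u_def k_def by simp
  then have "k * g x (\<phi> x) (\<psi> x) = 0"
    using metric_linear_left[OF uE \<phi>E \<psi>E, of "f x" "- k"] by simp
  then show ?thesis
    unfolding k_def .
qed

lemma section_vanishes_where_anchor_nonzero:
  assumes \<psi>: "\<psi> \<in> \<Gamma>" and f: "f \<in> C" and nonzero: "anchor \<psi> f x \<noteq> 0"
  shows "\<psi> x = 0"
proof (rule metric_nondegenerate[OF section_in_fiber[OF \<psi>]])
  fix v assume vE: "v \<in> E x"
  then obtain \<phi> where \<phi>: "\<phi> \<in> \<Gamma>" "\<phi> x = v"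
    using fiber_vector_extends by blast
  have "g x v (\<psi> x) = 0"
    using anchor_mult_metric_eq_zero[OF \<psi> \<phi>(1) f, of x] nonzero \<phi>(2) by simp
  then show "g x (\<psi> x) v = 0"
    using metric_sym[OF section_in_fiber[OF \<psi>] vE] by simp
qed

lemma anchor_vanishes:
  assumes \<psi>: "\<psi> \<in> \<Gamma>" and f: "f \<in> C"
  shows "anchor \<psi> f = (\<lambda>_. 0)"
proof
  fix x
  define k where "k = anchor \<psi> f"
  have "smul_fn k \<psi> = (\<lambda>_. 0)"
  proof
    fix y
    show "smul_fn k \<psi> y = 0"
      using section_vanishes_where_anchor_nonzero[OF \<psi> f, of y]
      unfolding smul_fn_def k_def by (cases "anchor \<psi> f y = 0") simp_all
  qed
  then have "k x * k x = anchor (\<lambda>_. 0) f x"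
    using anchor_smul[OF anchor_in_functions[OF \<psi> f] \<psi> f, of x]
    unfolding k_def by simp
  also have "\<dots> = 0"
    using anchor_zero_section[OF f] .
  finally show "anchor \<psi> f x = 0"
    unfolding k_def by simp
qed

end

theorem mainTheorem4:
  fixes C :: "('m \<Rightarrow> real) set"
    and E :: "'m \<Rightarrow> 'v::real_vector set"
    and \<Gamma> :: "('m \<Rightarrow> 'v) set"
    and anchor :: "('m \<Rightarrow> 'v) \<Rightarrow> ('m \<Rightarrow> real) \<Rightarrow> ('m \<Rightarrow> real)"
    and br :: "('m \<Rightarrow> 'v) \<Rightarrow> ('m \<Rightarrow> 'v) \<Rightarrow> ('m \<Rightarrow> 'v)"
    and g :: "'m \<Rightarrow> 'v \<Rightarrow> 'v \<Rightarrow> real"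
  assumes "lie_algebroid C E \<Gamma> anchor br"
    and "nondeg_sym_fiber_metric C E \<Gamma> g"
    and "invariant_metric \<Gamma> anchor br g"
  shows "\<forall>\<psi>\<in>\<Gamma>. \<forall>f\<in>C. anchor \<psi> f = (\<lambda>_. 0)"
proof -
  interpret lie_algebroid_invariant_metric C E \<Gamma> anchor br g
    by unfold_locales (fact assms)+
  show ?thesis
    using anchor_vanishes by blast
qed

end
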